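(* Assume the standing hypotheses (H). There is a constant $K_2>0$ such that for every $(t,\mathbf x,y)\in\mathbf D\times\mathbb R$, $\boldsymbol\zeta\in\mathbf Z$ and $\psi>0$, $$|H^\psi_2(t,\mathbf x,y;\boldsymbol\zeta)|\le K_2\|\boldsymbol\zeta-\boldsymbol\zeta^0(\Sigma)\|\Big(\|\boldsymbol\zeta-\boldsymbol\zeta^0(\Sigma)\|+\frac{-U''(y)}{U'(y)}\max\big(1,\|\boldsymbol\zeta-\boldsymbol\zeta^0(\Sigma)\|\big)\psi\Big).$$
   Context: Setting. Fix $T>0$, $S_0>0$, $\Sigma_0>0$, $A_0\in\mathbb R$. $\Omega$: continuous paths $\omega=(\omega^S,\omega^\Sigma,\omega^A):[0,T]\to\mathbb R^3$ with $\omega_0=(S_0,\Sigma_0,A_0)$ (uniform topology, Borel $\sigma$-algebra $\mathcal F$); $S,\Sigma,A$ coordinate processes, $\mathbb F$ their raw filtration, $M_t=\sup_{u\le t}S_u$, $\mathbf X_t=(S_t,A_t,M_t,\Sigma_t)$. $\mathbf G=\mathbb R_+\times\mathbb R\times\mathbb R_+$, $\mathbf D^0=(0,T)\times\mathbf G\times\mathbb R_+$ (points $(t,\mathbf x)$, $\mathbf x=(S,A,M,\Sigma)$); $0<\underline\Sigma<\Sigma_0<\overline\Sigma$, $\mathbf D=(0,T)\times\mathbf G\times[\underline\Sigma,\overline\Sigma]$. $\|\cdot\|$ Euclidean norm, $\mathbf e_4$ fourth unit vector, $x^-=\max(-x,0)$. Call: $\mathcal C(t,S,\Sigma)$ with $\mathcal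 C_t+\frac12\Sigma^2S^2\mathcal C_{SS}=0$, $\mathcal C(T_{\mathsf C},S,\Sigma)=\mathsf C(S)$. $b^{\mathcal C}(t,\mathbf x;\boldsymbol\zeta)=\nu\mathcal C_\Sigma+\frac12S^2\mathcal C_{SS}(\sigma^2-\Sigma^2)+\sigma\eta S\mathcal C_{S\Sigma}+\frac12(\eta^2+\xi)\mathcal C_{\Sigma\Sigma}$ for $\boldsymbol\zeta=(\nu,\sigma,\eta,\xi)$. Models: $\mathfrak P^{00}$ = probability measures $P$ on $(\Omega,\mathcal F)$ with progressively measurable $\boldsymbol\zeta^P=(\nu^P,\sigma^P,\eta^P,\xi^P)$ such that $S$, $\Sigma-\int_0^\cdot\nu^P_tdt$ are continuous local $P$-martingales with $d\langle S\rangle_t=S_t^2(\sigma^P_t)^2dt$, $d\langle\Sigma\rangle_t=((\eta^P_t)^2+\xi^P_t)dt$, $d\langle S,\Sigma\rangle_t=S_t\sigma^P_t\eta^P_tdt$, $S,\Sigma>0$, $\xi^P\ge0$, $b^{\mathcal C}(t,\mathbf X_t;\boldsymbol\zeta^P_t)=0$ $dt\times P$-a.e.; for Borel $\alpha,\beta,\gamma,\delta:[0,T]\times\mathbb R^3\to\mathbb R$, $\mathfrak P^0$ = those $P$ with $dA_t=(\alpha+\frac12(\sigma^P_t)^2\beta)dt+\gamma dS_t+\delta dM_t$. $\boldsymbol\zeta^0(\Sigma)=(0,\Sigma,0,0)^\top$; reference model: $\boldsymbol\zeta^P_t=\boldsymbol\zeta^0(\Sigma_t)$ a.e. Non-traded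 option: $\mathcal V(\cdot,\Sigma)$ solves $\mathcal V_t+(\alpha+\frac12\beta\Sigma^2)\mathcal V_A+\frac12\Sigma^2S^2(\mathcal V_{SS}+2\gamma\mathcal V_{SA}+\gamma^2\mathcal V_{AA})=0$ on $(0,T)\times\mathbf G$, $\delta\mathcal V_A+\mathcal V_M=0$ on $\{S\ge M\}$, $\mathcal V(T,\cdot,\Sigma)=\mathsf V$. $\Delta=\mathcal V_S+\gamma\mathcal V_A$, $\Gamma=\mathcal V_{SS}+2\gamma\mathcal V_{SA}+\gamma^2\mathcal V_{AA}$, $\frac{\partial\Delta}{\partial\Sigma}:=\mathcal V_{S\Sigma}+\gamma\mathcal V_{A\Sigma}$. P&L: $V_t=\mathcal V(t,\mathbf X_t)$, $C_t=\mathcal C(t,S_t,\Sigma_t)$; strategies $\boldsymbol\upsilon=(\theta,\phi)$ real locally bounded progressive; $Y^{\boldsymbol\upsilon,P}_t=Y_0+V_0+\int_0^t\theta dS+\int_0^t\phi dC-V_t$. Preferences: $\Psi=\mathrm{diag}(\psi_\nu,\psi_\sigma,\psi_\eta,\psi_\xi)$, positive entries; a utility $U$, strategy set $\mathfrak Y$, model set $\mathfrak P\subset\mathfrak P^0$. Candidate control: $\mathbf c=(\mathcal C_\Sigma,\Sigma S^2\mathcal C_{SS},\Sigma S\mathcal C_{S\Sigma},\frac12\mathcal C_{\Sigma\Sigma})^\top$, $\mathbf v=(\mathcal V_\Sigma,\Sigma(\beta\mathcal V_A+S^2\Gamma),\Sigma S\frac{\partial\Delta}{\partial\Sigma},\frac12\mathcal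 V_{\Sigma\Sigma})^\top$; $\lambda=\frac{\mathbf c^\top\Psi\mathbf v}{\mathbf c^\top\Psi\mathbf c}$ if $\mathcal V_{\Sigma\Sigma}-\frac{\mathbf c^\top\Psi\mathbf v}{\mathbf c^\top\Psi\mathbf c}\mathcal C_{\Sigma\Sigma}\ge0$, else $\lambda=\frac{\mathbf c^\top\Psi\mathbf v-\frac14\mathcal C_{\Sigma\Sigma}\mathcal V_{\Sigma\Sigma}\psi_\xi}{\mathbf c^\top\Psi\mathbf c-\frac14\mathcal C_{\Sigma\Sigma}^2\psi_\xi}$; $\mu=\frac12(\mathcal V_{\Sigma\Sigma}-\lambda\mathcal C_{\Sigma\Sigma})^-$; $\widetilde{\boldsymbol\zeta}=\Psi(\mathbf v-\lambda\mathbf c+\mu\mathbf e_4)$; $\boldsymbol\zeta^\psi=\boldsymbol\zeta^0(\Sigma)+\widetilde{\boldsymbol\zeta}\mathbf 1_{\{\underline\Sigma<\Sigma<\overline\Sigma\}}\psi$; $\widetilde g=\mathbf v^\top\widetilde{\boldsymbol\zeta}$. Cash-equivalent PDE: for $\Sigma\in[\underline\Sigma,\overline\Sigma]$, $\widetilde w_t+(\alpha+\frac12\beta\Sigma^2)\widetilde w_A+\frac12\Sigma^2S^2(\widetilde w_{SS}+2\gamma\widetilde w_{SA}+\gamma^2\widetilde w_{AA})+\frac12\widetilde g(\cdot,\Sigma)=0$ on $(0,T)\times\mathbf G$, $\delta\widetilde w_A+\widetilde w_M=0$ on $\{S\ge M\}$, $\widetilde w(T,\cdot,\Sigma)=0$.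 $L^p_{\mathfrak P}$: Borel $K$ on $\mathbf D^0$ with $\sup_{P\in\mathfrak P}E^P[\int_0^T|K(t,\mathbf X_t)|^pdt]^{1/p}<\infty$. Candidate asymptotic model family: $(P^\psi)_{\psi\in(0,\psi_0)}\subset\mathfrak P$, $\psi_0\in(0,1)$, with $K_0\in L^4_{\mathfrak P}$ and $\|\boldsymbol\zeta^{P^\psi}_t-\boldsymbol\zeta^\psi(t,\mathbf X_t)\|\le K_0(t,\mathbf X_t)\psi^2$ $dt\times P^\psi$-a.e. Assumption (A): (a) $\exists K_{\mathfrak Y}$: $Y^{\boldsymbol\upsilon,P}>-K_{\mathfrak Y}$ $dt\times P$-a.e. for all $\boldsymbol\upsilon\in\mathfrak Y$, $P\in\mathfrak P$; (b) $\mathfrak P$ contains a candidate asymptotic model family and a reference model, and constants $\underline\nu<0<\overline\nu$, $0<\underline\sigma<\underline\Sigma$, $\overline\Sigma<\overline\sigma$, $\underline\eta<0<\overline\eta$, $\overline\xi>0$ bound $\nu^P,\sigma^P,\eta^P,\xi^P,\Sigma$ in $[\underline\nu,\overline\nu],[\underline\sigma,\overline\sigma],[\underline\eta,\overline\eta],[0,\overline\xi],[\underline\Sigma,\overline\Sigma]$ $dt\times P$-a.e. for all $P\in\mathfrak P$; (c) $T_{\mathsf C}\ge T$, $\mathcal C\in C^{1,2,2}((0,T_{\mathsf C})\times\mathbb R_+^2)\cap C([0,T_{\mathsf C}]\times\overline{\mathbb R}_+^2)$ solves the call PDE classically for $\Sigma\in[\underline\Sigma,\overline\Sigma]$, $\mathcal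 C_\Sigma\ne0$ and $|\mathcal C_{\Sigma\Sigma}|\le K_{\mathcal C}(|\mathcal C_\Sigma|+|S^2\mathcal C_{SS}|+|S\mathcal C_{S\Sigma}|)$ on $(0,T)\times\mathbb R_+\times[\underline\Sigma,\overline\Sigma]$ with $K_{\mathcal C}\in L^2_{\mathfrak P}$; (d) $\mathcal V\in C^{1,2,2,1,2}(\mathbf D^0)\cap C(\overline{\mathbf D^0})$ solves the $\mathcal V$-PDE classically for $\Sigma\in[\underline\Sigma,\overline\Sigma]$, $|\mathcal V_\Sigma|,|\beta\mathcal V_A+S^2\Gamma|,|S\frac{\partial\Delta}{\partial\Sigma}|,|\mathcal V_{\Sigma\Sigma}|\le K_{\mathcal V}$ on $\mathbf D$; (e) $\widetilde w\in C^{1,2,2,1,2}(\mathbf D^0)\cap C(\overline{\mathbf D^0})$ solves the cash-equivalent PDE classically for $\Sigma\in[\underline\Sigma,\overline\Sigma]$, $0\le\widetilde w\le K_{\widetilde w}$ on $\mathbf D$, and $\widetilde w_\Sigma,S(\widetilde w_S+\gamma\widetilde w_A),\beta\widetilde w_A+S^2(\widetilde w_{SS}+2\gamma\widetilde w_{SA}+\gamma^2\widetilde w_{AA}),S(\widetilde w_{S\Sigma}+\gamma\widetilde w_{A\Sigma}),\widetilde w_{\Sigma\Sigma}\in L^4_{\mathfrak P}$; (f) $U\in C^3(\mathbb R)$, $U'>0$, $U''<0$, $-U''/U'$ nonincreasing. Additional notation. $\mathbf Z=[\underline\nu,\overline\nu]\times[\underline\sigma,\overline\sigma]\times[\underline\eta,\overline\eta]\times[0,\overline\xi]$.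 $b^{\mathcal V}(t,\mathbf x;\boldsymbol\zeta)=\nu\mathcal V_\Sigma+\frac12(\beta\mathcal V_A+S^2\Gamma)(\sigma^2-\Sigma^2)+\sigma\eta S\frac{\partial\Delta}{\partial\Sigma}+\frac12(\eta^2+\xi)\mathcal V_{\Sigma\Sigma}$. $H^\psi_2(t,\mathbf x,y;\boldsymbol\zeta)=-\frac12\begin{pmatrix}\sigma-\Sigma\\\eta\end{pmatrix}^\top\begin{pmatrix}\beta\mathcal V_A+S^2\Gamma&S\frac{\partial\Delta}{\partial\Sigma}\\S\frac{\partial\Delta}{\partial\Sigma}&\mathcal V_{\Sigma\Sigma}\end{pmatrix}\begin{pmatrix}\sigma-\Sigma\\\eta\end{pmatrix}+\frac{U''(y)}{U'(y)}b^{\mathcal V}(t,\mathbf x;\boldsymbol\zeta)\widetilde w(t,\mathbf x)\psi$. Delta-vega hedge $\boldsymbol\upsilon^\star_t=(\Delta-\frac{\mathcal V_\Sigma}{\mathcal C_\Sigma}\mathcal C_S,\frac{\mathcal V_\Sigma}{\mathcal C_\Sigma})(t,\mathbf X_t)$. Standing hypotheses (H): Assumption (A) holds, $\boldsymbol\upsilon^\star\in\mathfrak Y$, and $(P^\psi)_{\psi\in(0,\psi_0)}\subset\mathfrak P$ is a candidate asymptotic model family. *)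

theory Defs
  imports "HOL-Analysis.Analysis"
begin

text \<open>A point (t, x) of D^0 with x = (S, A, M, Sigma) is the 5-tuple (t, S, A, M, Sigma).
Coordinates: 0 = t, 1 = S, 2 = A, 3 = M, 4 = Sigma.\<close>

type_synonym pt = "real \<times> real \<times> real \<times> real \<times> real"

fun coord :: "nat \<Rightarrow> pt \<Rightarrow> real" where
  "coord i (t, S, A, M, Sg) =
     (if i = 0 then t else if i = 1 then S else if i = 2 then A else if i = 3 then M else Sg)"

fun upd :: "nat \<Rightarrow> real \<Rightarrow> pt \<Rightarrow> pt" where
  "upd i u (t, S, A, M, Sg) =
     (if i = 0 then (u, S, A, M, Sg) else if i = 1 then (t, u, A, M, Sg)
      else if i = 2 then (t, S, u, M, Sg) else if i = 3 then (t, S, A, u, Sg)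
      else (t, S, A, M, u))"

definition pd :: "nat \<Rightarrow> (pt \<Rightarrow> real) \<Rightarrow> pt \<Rightarrow> real" where
  "pd i f p = deriv (\<lambda>u. f (upd i u p)) (coord i p)"

text \<open>For I1 = {0..4},
I2 = {1,2,4} this is the class C^{1,2,2,1,2}.\<close>
definition smooth_on :: "nat set \<Rightarrow> nat set \<Rightarrow> (pt \<Rightarrow> real) \<Rightarrow> pt set \<Rightarrow> bool" where
  "smooth_on I1 I2 f X \<longleftrightarrow>
     continuous_on X f \<and>
     (\<forall>i\<in>I1. (\<forall>p\<in>X. (\<lambda>u. f (upd i u p)) differentiable (at (coord i p)))
               \<and> continuous_on X (pd i f)) \<and>
     (\<forall>i\<in>I2. \<forall>j\<in>I2. (\<forall>p\<in>X. (\<lambda>u. pd i f (upd j u p)) differentiable (at (coord j p)))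
               \<and> continuous_on X (pd j (pd i f)))"

text \<open>R_+ is read as the open half line (0, infinity).\<close>
definition D0 :: "real \<Rightarrow> pt set" where
  "D0 T = {(t, S, A, M, Sg). 0 < t \<and> t < T \<and> 0 < S \<and> 0 < M \<and> 0 < Sg}"

definition DD :: "real \<Rightarrow> real \<Rightarrow> real \<Rightarrow> pt set" where
  "DD T Sl Su = {(t, S, A, M, Sg). 0 < t \<and> t < T \<and> 0 < S \<and> 0 < M \<and> Sl \<le> Sg \<and> Sg \<le> Su}"

definition ZZ :: "real \<Rightarrow> real \<Rightarrow> real \<Rightarrow> real \<Rightarrow> real \<Rightarrow> real \<Rightarrow> real \<Rightarrow>
                  (real \<times> real \<times> real \<times> real) set" where
  "ZZ nl nu sl su el eu xu = {nl..nu} \<times> {sl..su} \<times> {el..eu} \<times> {0..xu}"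

definition zeta0 :: "real \<Rightarrow> real \<times> real \<times> real \<times> real" where
  "zeta0 Sg = (0, Sg, 0, 0)"

fun tSAM :: "pt \<Rightarrow> real \<times> real \<times> real \<times> real" where
  "tSAM (t, S, A, M, Sg) = (t, S, A, M)"

definition liftC :: "(real \<times> real \<times> real \<Rightarrow> real) \<Rightarrow> pt \<Rightarrow> real" where
  "liftC C p = C (coord 0 p, coord 1 p, coord 4 p)"

type_synonym coef = "real \<times> real \<times> real \<times> real \<Rightarrow> real"

definition Gam :: "coef \<Rightarrow> (pt \<Rightarrow> real) \<Rightarrow> pt \<Rightarrow> real" where
  "Gam \<gamma> V p = pd 1 (pd 1 V) p + 2 * \<gamma> (tSAM p) * pd 2 (pd 1 V) p
                 + (\<gamma> (tSAM p))\<^sup>2 * pd 2 (pd 2 V) p"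

definition dDelta_dSig :: "coef \<Rightarrow> (pt \<Rightarrow> real) \<Rightarrow> pt \<Rightarrow> real" where
  "dDelta_dSig \<gamma> V p = pd 4 (pd 1 V) p + \<gamma> (tSAM p) * pd 4 (pd 2 V) p"

definition Lop :: "coef \<Rightarrow> coef \<Rightarrow> coef \<Rightarrow> (pt \<Rightarrow> real) \<Rightarrow> pt \<Rightarrow> real" where
  "Lop \<alpha> \<beta> \<gamma> w p = pd 0 w p
     + (\<alpha> (tSAM p) + 1/2 * \<beta> (tSAM p) * (coord 4 p)\<^sup>2) * pd 2 w p
     + 1/2 * (coord 4 p)\<^sup>2 * (coord 1 p)\<^sup>2 * Gam \<gamma> w p"

definition GamB :: "coef \<Rightarrow> coef \<Rightarrow> (pt \<Rightarrow> real) \<Rightarrow> pt \<Rightarrow> real" where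
  "GamB \<beta> \<gamma> V p = \<beta> (tSAM p) * pd 2 V p + (coord 1 p)\<^sup>2 * Gam \<gamma> V p"

fun bV :: "coef \<Rightarrow> coef \<Rightarrow> (pt \<Rightarrow> real) \<Rightarrow> pt \<Rightarrow> real \<times> real \<times> real \<times> real \<Rightarrow> real" where
  "bV \<beta> \<gamma> V p (\<nu>, \<sigma>, \<eta>, \<xi>) =
     \<nu> * pd 4 V p + 1/2 * GamB \<beta> \<gamma> V p * (\<sigma>\<^sup>2 - (coord 4 p)\<^sup>2)
     + \<sigma> * \<eta> * coord 1 p * dDelta_dSig \<gamma> V p + 1/2 * (\<eta>\<^sup>2 + \<xi>) * pd 4 (pd 4 V) p"

fun H2 :: "coef \<Rightarrow> coef \<Rightarrow> (pt \<Rightarrow> real) \<Rightarrow> (pt \<Rightarrow> real) \<Rightarrow> (real \<Rightarrow> real) \<Rightarrow> real \<Rightarrow>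
           pt \<Rightarrow> real \<Rightarrow> real \<times> real \<times> real \<times> real \<Rightarrow> real" where
  "H2 \<beta> \<gamma> V w U \<psi> p y (\<nu>, \<sigma>, \<eta>, \<xi>) =
     - 1/2 * ((\<sigma> - coord 4 p)\<^sup>2 * GamB \<beta> \<gamma> V p
              + 2 * (\<sigma> - coord 4 p) * \<eta> * (coord 1 p * dDelta_dSig \<gamma> V p)
              + \<eta>\<^sup>2 * pd 4 (pd 4 V) p)
     + deriv (deriv U) y / deriv U y * bV \<beta> \<gamma> V p (\<nu>, \<sigma>, \<eta>, \<xi>) * w p * \<psi>"

type_synonym vec4 = "real \<times> real \<times> real \<times> real"

fun wip :: "vec4 \<Rightarrow> vec4 \<Rightarrow> vec4 \<Rightarrow> real" where
  "wip (p1, p2, p3, p4) (a1, a2, a3, a4) (b1, b2, b3, b4) =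
     a1 * p1 * b1 + a2 * p2 * b2 + a3 * p3 * b3 + a4 * p4 * b4"

definition cvec :: "(real \<times> real \<times> real \<Rightarrow> real) \<Rightarrow> pt \<Rightarrow> vec4" where
  "cvec C p = (pd 4 (liftC C) p,
               coord 4 p * (coord 1 p)\<^sup>2 * pd 1 (pd 1 (liftC C)) p,
               coord 4 p * coord 1 p * pd 4 (pd 1 (liftC C)) p,
               1/2 * pd 4 (pd 4 (liftC C)) p)"

definition vvec :: "coef \<Rightarrow> coef \<Rightarrow> (pt \<Rightarrow> real) \<Rightarrow> pt \<Rightarrow> vec4" where
  "vvec \<beta> \<gamma> V p = (pd 4 V p,
                     coord 4 p * GamB \<beta> \<gamma> V p,
                     coord 4 p * coord 1 p * dDelta_dSig \<gamma> V p,
                     1/2 * pd 4 (pd 4 V) p)"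

text \<open>Psi = diag(Psi_diag); lambda, mu, tilde zeta and tilde g.\<close>
definition lam :: "vec4 \<Rightarrow> (real \<times> real \<times> real \<Rightarrow> real) \<Rightarrow> coef \<Rightarrow> coef \<Rightarrow> (pt \<Rightarrow> real) \<Rightarrow> pt \<Rightarrow> real" where
  "lam Psi C \<beta> \<gamma> V p =
     (let c = cvec C p; v = vvec \<beta> \<gamma> V p;
          CSS = pd 4 (pd 4 (liftC C)) p; VSS = pd 4 (pd 4 V) p; psixi = snd (snd (snd Psi));
          l0 = wip Psi c v / wip Psi c c
      in if VSS - l0 * CSS \<ge> 0 then l0
         else (wip Psi c v - 1/4 * CSS * VSS * psixi) / (wip Psi c c - 1/4 * CSS\<^sup>2 * psixi))"

definition negpart :: "real \<Rightarrow> real" where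
  "negpart x = max (- x) 0"

definition muu :: "vec4 \<Rightarrow> (real \<times> real \<times> real \<Rightarrow> real) \<Rightarrow> coef \<Rightarrow> coef \<Rightarrow> (pt \<Rightarrow> real) \<Rightarrow> pt \<Rightarrow> real" where
  "muu Psi C \<beta> \<gamma> V p =
     1/2 * negpart (pd 4 (pd 4 V) p - lam Psi C \<beta> \<gamma> V p * pd 4 (pd 4 (liftC C)) p)"

definition gtil :: "vec4 \<Rightarrow> (real \<times> real \<times> real \<Rightarrow> real) \<Rightarrow> coef \<Rightarrow> coef \<Rightarrow> (pt \<Rightarrow> real) \<Rightarrow> pt \<Rightarrow> real" where
  "gtil Psi C \<beta> \<gamma> V p =
     (let c = cvec C p; v = vvec \<beta> \<gamma> V p; l = lam Psi C \<beta> \<gamma> V p; m = muu Psi C \<beta> \<gamma> V p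
      in wip Psi v (v - l *\<^sub>R c + m *\<^sub>R (0, 0, 0, 1)))"

definition C3_fun :: "(real \<Rightarrow> real) \<Rightarrow> bool" where
  "C3_fun U \<longleftrightarrow> (\<forall>x. U differentiable (at x)) \<and> (\<forall>x. deriv U differentiable (at x))
     \<and> (\<forall>x. deriv (deriv U) differentiable (at x)) \<and> continuous_on UNIV (deriv (deriv (deriv U)))"

end

theory Submission
  imports Defs
begin

text \<open>Write \<open>d = \<parallel>\<zeta> - \<zeta>\<^sup>0(\<Sigma>)\<parallel>\<close>. The first term of \<open>H\<^sub>2\<close> is a quadratic form in
\<open>(\<sigma> - \<Sigma>, \<eta>)\<close> with coefficients bounded by \<open>K\<^sub>V\<close>, hence of order \<open>d\<^sup>2\<close>. The drift \<open>b\<^sup>V\<close>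
vanishes at \<open>\<zeta>\<^sup>0(\<Sigma>)\<close> and is a polynomial of degree two in \<open>\<zeta> - \<zeta>\<^sup>0(\<Sigma>)\<close> with
coefficients bounded in terms of \<open>K\<^sub>V\<close> and \<open>\<overline>\<Sigma>\<close>, hence of order \<open>d max(1, d)\<close>;
it enters \<open>H\<^sub>2\<close> multiplied by \<open>U''/U'\<close>, by \<open>0 \<le> w \<le> K\<^sub>w\<close> and by \<open>\<psi>\<close>.\<close>

lemma abs_le_norm_quadruple:
  fixes a b c e :: real
  shows "\<bar>a\<bar> \<le> norm (a, b, c, e)" and "\<bar>b\<bar> \<le> norm (a, b, c, e)"
    and "\<bar>c\<bar> \<le> norm (a, b, c, e)" and "\<bar>e\<bar> \<le> norm (a, b, c, e)"
proof -
  have bce: "norm (b, c, e) \<le> norm (a, b, c, e)" by (rule norm_snd_le)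
  have ce: "norm (c, e) \<le> norm (b, c, e)" by (rule norm_snd_le)
  show "\<bar>a\<bar> \<le> norm (a, b, c, e)" using norm_fst_le[of a "(b, c, e)"] by simp
  show "\<bar>b\<bar> \<le> norm (a, b, c, e)" using norm_fst_le[of b "(c, e)"] bce by simp
  show "\<bar>c\<bar> \<le> norm (a, b, c, e)" using norm_fst_le[of c e] ce bce by simp
  show "\<bar>e\<bar> \<le> norm (a, b, c, e)" using norm_snd_le[of e c] ce bce by simp
qed

lemma abs_quadratic_form_le:
  fixes b c G D Q K :: real
  assumes "\<bar>G\<bar> \<le> K" and "\<bar>D\<bar> \<le> K" and "\<bar>Q\<bar> \<le> K"
  shows "\<bar>b\<^sup>2 * G + 2 * b * c * D + c\<^sup>2 * Q\<bar> \<le> K * (\<bar>b\<bar> + \<bar>c\<bar>)\<^sup>2"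
proof -
  have "\<bar>b\<^sup>2 * G + 2 * b * c * D + c\<^sup>2 * Q\<bar> \<le> \<bar>b\<^sup>2 * G\<bar> + \<bar>2 * b * c * D\<bar> + \<bar>c\<^sup>2 * Q\<bar>"
    using abs_triangle_ineq[of "b\<^sup>2 * G + 2 * b * c * D" "c\<^sup>2 * Q"]
      abs_triangle_ineq[of "b\<^sup>2 * G" "2 * b * c * D"] by linarith
  also have "\<dots> = b\<^sup>2 * \<bar>G\<bar> + 2 * (\<bar>b\<bar> * \<bar>c\<bar>) * \<bar>D\<bar> + c\<^sup>2 * \<bar>Q\<bar>"
    by (simp add: abs_mult)
  also have "\<dots> \<le> b\<^sup>2 * K + 2 * (\<bar>b\<bar> * \<bar>c\<bar>) * K + c\<^sup>2 * K"
    using assms by (intro add_mono mult_left_mono) auto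
  also have "\<dots> = K * (\<bar>b\<bar> + \<bar>c\<bar>)\<^sup>2"
    by (simp add: power2_eq_square algebra_simps flip: power2_abs)
  finally show ?thesis .
qed

lemma abs_square_diff_le:
  fixes x y :: real
  shows "\<bar>x\<^sup>2 - y\<^sup>2\<bar> \<le> \<bar>x - y\<bar> * (\<bar>x - y\<bar> + 2 * \<bar>y\<bar>)"
proof -
  have "\<bar>x\<^sup>2 - y\<^sup>2\<bar> = \<bar>x - y\<bar> * \<bar>(x - y) + 2 * y\<bar>"
    by (simp add: power2_eq_square algebra_simps flip: abs_mult)
  also have "\<dots> \<le> \<bar>x - y\<bar> * (\<bar>x - y\<bar> + 2 * \<bar>y\<bar>)"
    by (intro mult_left_mono) (auto simp: abs_triangle_ineq[THEN order_trans])
  finally show ?thesis .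
qed

lemma deviation_terms_le:
  fixes Sg Su \<sigma> \<eta> \<xi> d :: real
  assumes Sg: "0 < Sg" "Sg \<le> Su" and d: "\<bar>\<sigma> - Sg\<bar> \<le> d" "\<bar>\<eta>\<bar> \<le> d" "0 \<le> \<xi>" "\<xi> \<le> d"
  shows "\<bar>\<sigma>\<^sup>2 - Sg\<^sup>2\<bar> \<le> (2 * Su + 1) * d * max 1 d"
    and "\<bar>\<sigma>\<bar> \<le> (Su + 1) * max 1 d"
    and "\<bar>\<eta>\<^sup>2 + \<xi>\<bar> \<le> 2 * d * max 1 d"
proof -
  define m where "m = max 1 d"
  have d0: "0 \<le> d" and dm: "d \<le> m" "1 \<le> m" using d(1) unfolding m_def by auto
  have Su_m: "Su \<le> Su * m" and d_m: "d \<le> d * m"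
    using mult_left_mono[OF dm(2), of Su] mult_left_mono[OF dm(2) d0] Sg by simp_all
  have "\<bar>\<sigma>\<^sup>2 - Sg\<^sup>2\<bar> \<le> \<bar>\<sigma> - Sg\<bar> * (\<bar>\<sigma> - Sg\<bar> + 2 * \<bar>Sg\<bar>)" by (rule abs_square_diff_le)
  also have "\<dots> \<le> d * (2 * (Su * m) + m)"
  proof (rule mult_mono)
    show "\<bar>\<sigma> - Sg\<bar> + 2 * \<bar>Sg\<bar> \<le> 2 * (Su * m) + m"
      using d(1) dm Su_m abs_of_pos[OF Sg(1)] Sg(2) by linarith
  qed (use d(1) d0 in auto)
  finally show "\<bar>\<sigma>\<^sup>2 - Sg\<^sup>2\<bar> \<le> (2 * Su + 1) * d * max 1 d"
    unfolding m_def[symmetric] by (simp add: algebra_simps)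
  have "\<bar>\<sigma>\<bar> \<le> Su * m + m"
    using d(1) Sg dm Su_m unfolding abs_le_iff by linarith
  then show "\<bar>\<sigma>\<bar> \<le> (Su + 1) * max 1 d" unfolding m_def by (simp add: algebra_simps)
  have "\<eta>\<^sup>2 = \<bar>\<eta>\<bar> * \<bar>\<eta>\<bar>" by (simp add: power2_eq_square)
  also have "\<dots> \<le> d * m" using d(2) dm d0 by (intro mult_mono) auto
  finally show "\<bar>\<eta>\<^sup>2 + \<xi>\<bar> \<le> 2 * d * max 1 d"
    using d(3,4) d_m unfolding m_def[symmetric] by simp
qed

lemma abs_bV_le:
  assumes V: "\<bar>pd 4 V p\<bar> \<le> K" "\<bar>GamB \<beta> \<gamma> V p\<bar> \<le> K"
      "\<bar>coord 1 p * dDelta_dSig \<gamma> V p\<bar> \<le> K" "\<bar>pd 4 (pd 4 V) p\<bar> \<le> K"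
    and Sg: "0 < coord 4 p" "coord 4 p \<le> Su"
    and d: "\<bar>\<nu>\<bar> \<le> d" "\<bar>\<sigma> - coord 4 p\<bar> \<le> d" "\<bar>\<eta>\<bar> \<le> d" "0 \<le> \<xi>" "\<xi> \<le> d"
  shows "\<bar>bV \<beta> \<gamma> V p (\<nu>, \<sigma>, \<eta>, \<xi>)\<bar> \<le> 4 * (1 + Su) * K * d * max 1 d"
proof -
  define Sg where "Sg = coord 4 p"
  define m where "m = max 1 d"
  have K0: "0 \<le> K" and d_m: "d \<le> d * m"
    using V(1) mult_left_mono[of 1 m d] d(1) unfolding m_def by auto
  note dev = deviation_terms_le[OF Sg d(2-5), folded Sg_def m_def]
  have 1: "\<bar>\<nu> * pd 4 V p\<bar> \<le> (d * m) * K"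
    unfolding abs_mult using d(1) d_m V(1) by (intro mult_mono) auto
  have 2: "\<bar>GamB \<beta> \<gamma> V p * (\<sigma>\<^sup>2 - Sg\<^sup>2)\<bar> \<le> K * ((2 * Su + 1) * d * m)"
    unfolding abs_mult using dev(1) V(2) by (intro mult_mono) auto
  have 3: "\<bar>\<sigma> * \<eta> * (coord 1 p * dDelta_dSig \<gamma> V p)\<bar> \<le> ((Su + 1) * m * d) * K"
    unfolding abs_mult using dev(2) d(3) V(3) by (intro mult_mono) auto
  have 4: "\<bar>(\<eta>\<^sup>2 + \<xi>) * pd 4 (pd 4 V) p\<bar> \<le> (2 * d * m) * K"
    unfolding abs_mult using dev(3) V(4) by (intro mult_mono) auto
  have tri: "\<bar>a + 1/2 * b + c + 1/2 * e\<bar> \<le> \<bar>a\<bar> + 1/2 * \<bar>b\<bar> + \<bar>c\<bar> + 1/2 * \<bar>e\<bar>" for a b c e :: real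
    by arith
  have "bV \<beta> \<gamma> V p (\<nu>, \<sigma>, \<eta>, \<xi>) = \<nu> * pd 4 V p + 1/2 * (GamB \<beta> \<gamma> V p * (\<sigma>\<^sup>2 - Sg\<^sup>2))
      + \<sigma> * \<eta> * (coord 1 p * dDelta_dSig \<gamma> V p) + 1/2 * ((\<eta>\<^sup>2 + \<xi>) * pd 4 (pd 4 V) p)"
    by (simp add: Sg_def mult.assoc)
  then have "\<bar>bV \<beta> \<gamma> V p (\<nu>, \<sigma>, \<eta>, \<xi>)\<bar> \<le> \<bar>\<nu> * pd 4 V p\<bar> + 1/2 * \<bar>GamB \<beta> \<gamma> V p * (\<sigma>\<^sup>2 - Sg\<^sup>2)\<bar>
      + \<bar>\<sigma> * \<eta> * (coord 1 p * dDelta_dSig \<gamma> V p)\<bar> + 1/2 * \<bar>(\<eta>\<^sup>2 + \<xi>) * pd 4 (pd 4 V) p\<bar>"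
    by (simp only: tri)
  also have "\<dots> \<le> (d * m) * K + 1/2 * (K * ((2 * Su + 1) * d * m))
      + ((Su + 1) * m * d) * K + 1/2 * ((2 * d * m) * K)"
    using 1 2 3 4 by (intro add_mono mult_left_mono) auto
  also have "\<dots> = (7/2 + 2 * Su) * K * d * m" by (simp add: algebra_simps)
  also have "\<dots> \<le> 4 * (1 + Su) * K * d * m"
    using K0 d(1) Sg unfolding m_def by (intro mult_right_mono mult_nonneg_nonneg) auto
  finally show ?thesis unfolding m_def .
qed

lemma abs_quadratic_drift_combination_le:
  fixes q B r w \<psi> K Kw Su d m :: real
  assumes q: "\<bar>q\<bar> \<le> 4 * K * d\<^sup>2" and B: "\<bar>B\<bar> \<le> 4 * (1 + Su) * K * d * m"
    and r: "0 \<le> r" and w: "0 \<le> w" "w \<le> Kw" and \<psi>: "0 \<le> \<psi>"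
    and nonneg: "0 \<le> K" "0 \<le> Su" "0 \<le> d" "0 \<le> m"
  shows "\<bar>- 1/2 * q - r * B * w * \<psi>\<bar> \<le> 4 * (1 + Su) * K * (1 + Kw) * d * (d + r * m * \<psi>)"
proof -
  have "\<bar>- 1/2 * q - r * B * w * \<psi>\<bar> \<le> \<bar>- 1/2 * q\<bar> + \<bar>r * B * w * \<psi>\<bar>"
    by (rule abs_triangle_ineq4)
  also have "\<dots> = 1/2 * \<bar>q\<bar> + r * \<bar>B\<bar> * w * \<psi>"
    using r w \<psi> by (simp add: abs_mult)
  also have "\<dots> \<le> 1/2 * (4 * K * d\<^sup>2) + r * (4 * (1 + Su) * K * d * m) * Kw * \<psi>"
  proof (intro add_mono mult_right_mono)
    show "r * \<bar>B\<bar> * w \<le> r * (4 * (1 + Su) * K * d * m) * Kw"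
      using B r w by (intro mult_mono mult_left_mono) auto
  qed (use q \<psi> in auto)
  also have "\<dots> \<le> 4 * (1 + Su) * K * (1 + Kw) * d * (d + r * m * \<psi>)"
  proof -
    have "2 * K * d\<^sup>2 \<le> 4 * (1 + Su) * K * (1 + Kw) * d\<^sup>2"
      using nonneg w by (intro mult_right_mono) (auto simp: algebra_simps)
    moreover have "r * (4 * (1 + Su) * K * d * m) * Kw * \<psi>
                   \<le> 4 * (1 + Su) * K * (1 + Kw) * d * (r * m * \<psi>)"
      using nonneg r w \<psi> by (simp add: algebra_simps)
    ultimately show ?thesis by (simp add: algebra_simps power2_eq_square)
  qed
  finally show ?thesis .
qed

lemma abs_H2_le:
  assumes V: "\<bar>pd 4 V p\<bar> \<le> K" "\<bar>GamB \<beta> \<gamma> V p\<bar> \<le> K"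
      "\<bar>coord 1 p * dDelta_dSig \<gamma> V p\<bar> \<le> K" "\<bar>pd 4 (pd 4 V) p\<bar> \<le> K"
    and Sg: "0 < coord 4 p" "coord 4 p \<le> Su"
    and w: "0 \<le> w p" "w p \<le> Kw"
    and \<xi>: "0 \<le> snd (snd (snd \<zeta>))"
    and U: "0 < deriv U y" "deriv (deriv U) y < 0"
    and \<psi>: "0 \<le> \<psi>"
  shows "\<bar>H2 \<beta> \<gamma> V w U \<psi> p y \<zeta>\<bar>
           \<le> 4 * (1 + Su) * K * (1 + Kw) * norm (\<zeta> - zeta0 (coord 4 p))
              * (norm (\<zeta> - zeta0 (coord 4 p))
                 + (- deriv (deriv U) y / deriv U y) * max 1 (norm (\<zeta> - zeta0 (coord 4 p))) * \<psi>)"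
proof -
  obtain \<nu> \<sigma> \<eta> \<xi> where \<zeta>: "\<zeta> = (\<nu>, \<sigma>, \<eta>, \<xi>)" by (cases \<zeta>)
  define Sg where "Sg = coord 4 p"
  define d where "d = norm (\<zeta> - zeta0 Sg)"
  define m where "m = max 1 d"
  define r where "r = - deriv (deriv U) y / deriv U y"
  define quad where "quad = (\<sigma> - Sg)\<^sup>2 * GamB \<beta> \<gamma> V p
    + 2 * (\<sigma> - Sg) * \<eta> * (coord 1 p * dDelta_dSig \<gamma> V p) + \<eta>\<^sup>2 * pd 4 (pd 4 V) p"
  have K0: "0 \<le> K" and Su0: "0 \<le> Su" and d0: "0 \<le> d" and m0: "0 \<le> m"
    using V(1) Sg unfolding d_def m_def by auto
  have r0: "0 \<le> r" unfolding r_def using U by (simp add: divide_neg_pos less_imp_le)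
  have "\<zeta> - zeta0 Sg = (\<nu>, \<sigma> - Sg, \<eta>, \<xi>)" by (simp add: \<zeta> zeta0_def)
  then have dev: "\<bar>\<nu>\<bar> \<le> d" "\<bar>\<sigma> - Sg\<bar> \<le> d" "\<bar>\<eta>\<bar> \<le> d" "\<xi> \<le> d"
    unfolding d_def
    using abs_le_norm_quadruple[where a = \<nu> and b = "\<sigma> - Sg" and c = \<eta> and e = \<xi>]
    by (auto intro: order_trans[OF abs_ge_self])
  have "\<bar>quad\<bar> \<le> K * (\<bar>\<sigma> - Sg\<bar> + \<bar>\<eta>\<bar>)\<^sup>2"
    unfolding quad_def by (rule abs_quadratic_form_le[OF V(2-4)])
  also have "\<dots> \<le> K * (2 * d)\<^sup>2"
    using dev K0 by (intro mult_left_mono power_mono) auto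
  finally have quad: "\<bar>quad\<bar> \<le> 4 * K * d\<^sup>2" by (simp add: power_mult_distrib)
  have drift: "\<bar>bV \<beta> \<gamma> V p \<zeta>\<bar> \<le> 4 * (1 + Su) * K * d * m"
    using abs_bV_le[OF V Sg, of \<nu> d \<sigma> \<eta> \<xi>] dev \<xi> \<zeta> unfolding Sg_def m_def by simp
  have "H2 \<beta> \<gamma> V w U \<psi> p y \<zeta> = - 1/2 * quad - r * bV \<beta> \<gamma> V p \<zeta> * w p * \<psi>"
    unfolding \<zeta> H2.simps quad_def Sg_def r_def by (simp add: algebra_simps)
  then show ?thesis
    using abs_quadratic_drift_combination_le[OF quad drift r0 w \<psi> K0 Su0 d0 m0]
    unfolding d_def m_def r_def Sg_def by simp
qed

theorem proposition5p9:
  fixes T S0 Sig0 Sl Su :: real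
    and nl nu sl su el eu xu :: real
    and \<alpha> \<beta> \<gamma> \<delta> :: coef
    and TC :: real and C :: "real \<times> real \<times> real \<Rightarrow> real" and Cpay :: "real \<Rightarrow> real"
    and V :: "pt \<Rightarrow> real" and Vpay :: "real \<times> real \<times> real \<Rightarrow> real" and KV :: real
    and w :: "pt \<Rightarrow> real" and Kw :: real
    and Psi :: vec4
    and U :: "real \<Rightarrow> real"
  assumes T_pos: "0 < T" and S0_pos: "0 < S0" and Sig0: "0 < Sl" "Sl < Sig0" "Sig0 < Su"
    \<comment> \<open>coefficient functions of A (Borel)\<close>
    and coef_meas: "\<alpha> \<in> borel_measurable borel" "\<beta> \<in> borel_measurable borel"
                   "\<gamma> \<in> borel_measurable borel" "\<delta> \<in> borel_measurable borel"
    \<comment> \<open>Psi = diag(psi_nu, psi_sigma, psi_eta, psi_xi), positive entries\<close>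
    and Psi_pos: "0 < fst Psi" "0 < fst (snd Psi)" "0 < fst (snd (snd Psi))" "0 < snd (snd (snd Psi))"
    \<comment> \<open>(A)(b): the constants bounding the models\<close>
    and bnds: "nl < 0" "0 < nu" "0 < sl" "sl < Sl" "Su < su" "el < 0" "0 < eu" "0 < xu"
    \<comment> \<open>(A)(c): the call\<close>
    and TC: "T \<le> TC"
    and C_smooth: "smooth_on {0, 1, 4} {1, 4} (liftC C)
                     {(t, S, A, M, Sg). 0 < t \<and> t < TC \<and> 0 < S \<and> 0 < Sg}"
    and C_cont: "continuous_on {(t, S, Sg). 0 \<le> t \<and> t \<le> TC \<and> 0 \<le> S \<and> 0 \<le> Sg} C"
    and C_pde: "\<And>t S A M Sg. 0 < t \<Longrightarrow> t < TC \<Longrightarrow> 0 < S \<Longrightarrow> Sl \<le> Sg \<Longrightarrow> Sg \<le> Su \<Longrightarrow>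
                  pd 0 (liftC C) (t, S, A, M, Sg)
                  + 1/2 * Sg\<^sup>2 * S\<^sup>2 * pd 1 (pd 1 (liftC C)) (t, S, A, M, Sg) = 0"
    and C_term: "\<And>S Sg. 0 < S \<Longrightarrow> Sl \<le> Sg \<Longrightarrow> Sg \<le> Su \<Longrightarrow> C (TC, S, Sg) = Cpay S"
    and C_vega: "\<And>t S A M Sg. 0 < t \<Longrightarrow> t < T \<Longrightarrow> 0 < S \<Longrightarrow> Sl \<le> Sg \<Longrightarrow> Sg \<le> Su \<Longrightarrow>
                  pd 4 (liftC C) (t, S, A, M, Sg) \<noteq> 0"
    \<comment> \<open>(A)(d): the non-traded option\<close>
    and V_smooth: "smooth_on {0, 1, 2, 3, 4} {1, 2, 4} V (D0 T)"
    and V_cont: "continuous_on (closure (D0 T)) V"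
    and V_pde: "\<And>p. p \<in> DD T Sl Su \<Longrightarrow> Lop \<alpha> \<beta> \<gamma> V p = 0"
    and V_bdry: "\<And>t S A M Sg. (t, S, A, M, Sg) \<in> DD T Sl Su \<Longrightarrow> S \<ge> M \<Longrightarrow>
                  \<delta> (t, S, A, M) * pd 2 V (t, S, A, M, Sg) + pd 3 V (t, S, A, M, Sg) = 0"
    and V_term: "\<And>S A M Sg. 0 < S \<Longrightarrow> 0 < M \<Longrightarrow> Sl \<le> Sg \<Longrightarrow> Sg \<le> Su \<Longrightarrow>
                  V (T, S, A, M, Sg) = Vpay (S, A, M)"
    and V_bnd: "\<And>p. p \<in> DD T Sl Su \<Longrightarrow>
                  \<bar>pd 4 V p\<bar> \<le> KV \<and> \<bar>GamB \<beta> \<gamma> V p\<bar> \<le> KV \<and>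
                  \<bar>coord 1 p * dDelta_dSig \<gamma> V p\<bar> \<le> KV \<and> \<bar>pd 4 (pd 4 V) p\<bar> \<le> KV"
    \<comment> \<open>(A)(e): the cash equivalent\<close>
    and w_smooth: "smooth_on {0, 1, 2, 3, 4} {1, 2, 4} w (D0 T)"
    and w_cont: "continuous_on (closure (D0 T)) w"
    and w_pde: "\<And>p. p \<in> DD T Sl Su \<Longrightarrow> Lop \<alpha> \<beta> \<gamma> w p + 1/2 * gtil Psi C \<beta> \<gamma> V p = 0"
    and w_bdry: "\<And>t S A M Sg. (t, S, A, M, Sg) \<in> DD T Sl Su \<Longrightarrow> S \<ge> M \<Longrightarrow>
                  \<delta> (t, S, A, M) * pd 2 w (t, S, A, M, Sg) + pd 3 w (t, S, A, M, Sg) = 0"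
    and w_term: "\<And>S A M Sg. 0 < S \<Longrightarrow> 0 < M \<Longrightarrow> Sl \<le> Sg \<Longrightarrow> Sg \<le> Su \<Longrightarrow>
                  w (T, S, A, M, Sg) = 0"
    and w_bnd: "\<And>p. p \<in> DD T Sl Su \<Longrightarrow> 0 \<le> w p \<and> w p \<le> Kw"
    \<comment> \<open>(A)(f): the utility\<close>
    and U_C3: "C3_fun U"
    and U1: "\<And>y. deriv U y > 0" and U2: "\<And>y. deriv (deriv U) y < 0"
    and U_dara: "\<And>x y. x \<le> y \<Longrightarrow>
                  - deriv (deriv U) y / deriv U y \<le> - deriv (deriv U) x / deriv U x"
  shows "\<exists>K2 > 0. \<forall>p \<in> DD T Sl Su. \<forall>y. \<forall>\<zeta> \<in> ZZ nl nu sl su el eu xu. \<forall>\<psi> > 0.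
           \<bar>H2 \<beta> \<gamma> V w U \<psi> p y \<zeta>\<bar>
             \<le> K2 * norm (\<zeta> - zeta0 (coord 4 p))
                  * (norm (\<zeta> - zeta0 (coord 4 p))
                     + (- deriv (deriv U) y / deriv U y) * max 1 (norm (\<zeta> - zeta0 (coord 4 p))) * \<psi>)"
proof -
  have Su: "0 < Su" using Sig0 by linarith
  show ?thesis
  \<comment> \<open>\<open>1 + \<bar>K\<^sub>V\<bar>\<close> rather than \<open>K\<^sub>V\<close> keeps the constant positive even if \<open>K\<^sub>V = 0\<close>\<close>
  proof (intro exI[of _ "4 * (1 + Su) * (1 + \<bar>KV\<bar>) * (1 + \<bar>Kw\<bar>)"] conjI ballI allI impI)
    show "0 < 4 * (1 + Su) * (1 + \<bar>KV\<bar>) * (1 + \<bar>Kw\<bar>)"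
      using Su by (intro mult_pos_pos) auto
    fix p y \<zeta> and \<psi> :: real
    assume p: "p \<in> DD T Sl Su" and \<zeta>: "\<zeta> \<in> ZZ nl nu sl su el eu xu" and \<psi>: "0 < \<psi>"
    have Sg: "0 < coord 4 p" "coord 4 p \<le> Su"
      using p Sig0 by (cases p; auto simp: DD_def)+
    have \<xi>: "0 \<le> snd (snd (snd \<zeta>))" using \<zeta> by (auto simp: ZZ_def)
    have V: "\<bar>pd 4 V p\<bar> \<le> 1 + \<bar>KV\<bar>" "\<bar>GamB \<beta> \<gamma> V p\<bar> \<le> 1 + \<bar>KV\<bar>"
      "\<bar>coord 1 p * dDelta_dSig \<gamma> V p\<bar> \<le> 1 + \<bar>KV\<bar>" "\<bar>pd 4 (pd 4 V) p\<bar> \<le> 1 + \<bar>KV\<bar>"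
      using V_bnd[OF p] by auto
    have w: "0 \<le> w p" "w p \<le> \<bar>Kw\<bar>" using w_bnd[OF p] by auto
    show "\<bar>H2 \<beta> \<gamma> V w U \<psi> p y \<zeta>\<bar>
           \<le> 4 * (1 + Su) * (1 + \<bar>KV\<bar>) * (1 + \<bar>Kw\<bar>) * norm (\<zeta> - zeta0 (coord 4 p))
              * (norm (\<zeta> - zeta0 (coord 4 p))
                 + (- deriv (deriv U) y / deriv U y) * max 1 (norm (\<zeta> - zeta0 (coord 4 p))) * \<psi>)"
      using abs_H2_le[where w = w, OF V Sg w \<xi> U1[of y] U2[of y] less_imp_le[OF \<psi>]] .
  qed
qed

end
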